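(* Let $Q,M,B\in\mathbb{R}^{n\times n}$ be symmetric positive semidefinite, set $M_B=BMB$, and assume $\operatorname{Im}\{M_B\}\subseteq\operatorname{Im}\{Q\}$. Define $$\Omega=\{\Pi\in\mathbb{R}^{n\times n}: Q-\Pi M^\dagger\Pi^\top\succeq0,\ \Pi^\top=MM^\dagger\Pi^\top\},$$ $$\mathcal{S}=\{(S,S^-): S\succeq0,\ S^-\succeq0,\ SS^-S=S,\ S^-SS^-=S^-,\ BM=SS^-BM\}.$$ Then $$\min_{(S,S^-)\in\mathcal{S}}\big\{\operatorname{tr}(QS)+\operatorname{tr}(M\,BS^-B)\big\}=\max_{\Pi\in\Omega}\operatorname{tr}\{2\Pi B\}=2\operatorname{tr}\Big\{\big(M_B^{1/2}QM_B^{1/2}\big)^{1/2}\Big\}.$$ The extreme values are attained at $S^*=M_B^{1/2}\big((M_B^{1/2}QM_B^{1/2})^{1/2}\big)^\dagger M_B^{1/2}$, $S^{-*}=(M_B^{1/2})^\dagger(M_B^{1/2}QM_B^{1/2})^{1/2}(M_B^{1/2})^\dagger$, and $\Pi^*=QS^*M_B^\dagger BM=QM_B^{1/2}\big((M_B^{1/2}QM_B^{1/2})^{1/2}\big)^\dagger(M_B^{1/2})^\dagger BM$; the optimal $\Pi^*$ is in general not unique.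
   Context: $\dagger$ denotes the Moore–Penrose pseudoinverse, $\operatorname{Im}$ the column space, and $X^{1/2}$ the PSD square root of a PSD matrix $X$. *)

theory Defs
  imports "HOL-Analysis.Analysis"
begin

definition psd :: "real^'n^'n \<Rightarrow> bool" where
  "psd A \<longleftrightarrow> transpose A = A \<and> (\<forall>x. 0 \<le> x \<bullet> (A *v x))"

text \<open>Moore--Penrose pseudoinverse, via the four Penrose conditions (unique solution).\<close>
definition pinv :: "real^'n^'m \<Rightarrow> real^'m^'n" where
  "pinv A = (THE X. A ** X ** A = A \<and> X ** A ** X = X \<and>
                    transpose (A ** X) = A ** X \<and> transpose (X ** A) = X ** A)"

definition psd_sqrt :: "real^'n^'n \<Rightarrow> real^'n^'n" where
  "psd_sqrt A = (THE X. psd X \<and> X ** X = A)"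

definition col_space :: "real^'n^'m \<Rightarrow> (real^'m) set" where
  "col_space A = range (\<lambda>x. A *v x)"

end

theory Submission
  imports Defs
begin

(* Weak duality is a completed square: for feasible (S, S^-) and Pi, with W = Pi^T - M B S^-,
     J(S, S^-) - tr(2 Pi B) = tr(S (Q - Pi M^+ Pi^T)) + tr(S W^T M^+ W),
   and both traces are traces of products of PSD matrices, hence nonnegative.
   For attainment put R = M_B^(1/2) and X = (R Q R)^(1/2). The hypothesis Im M_B <= Im Q makes
   ker X = ker R, so X X^+ = R R^+ = M_B M_B^+, and this orthogonal projection fixes B M. These
   absorption laws make S*, S^-* and Pi* feasible with both objectives equal to 2 tr X; for Pi* the
   constraint Q - Q R (X^+)^2 R Q >= 0 is Cauchy-Schwarz for the semi-inner product of Q.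
   Square roots and pseudoinverses are computed in an orthonormal eigenbasis, which the spectral
   theorem (proved by maximising the Rayleigh quotient) provides. *)

lemma inner_matrix_transpose:
  fixes A :: "real^'n^'m"
  shows "x \<bullet> (A *v y) = (transpose A *v x) \<bullet> y"
  by (metis dot_lmul_matrix transpose_matrix_vector)

lemma inner_symmetric_matrix:
  fixes A :: "real^'n^'n"
  assumes "transpose A = A"
  shows "(A *v x) \<bullet> y = x \<bullet> (A *v y)"
  using inner_matrix_transpose[of x A y] assms by simp

lemma transpose_diff: "transpose (A - B) = transpose A - (transpose B :: 'a::ab_group_add^'n^'m)"
  by (simp add: transpose_def vec_eq_iff)

lemma matrix_diff_ldistrib: "(A :: 'a::ring_1^'n^'m) ** (B - C) = A ** B - A ** C"
  by (simp add: matrix_matrix_mult_def vec_eq_iff sum_subtractf right_diff_distrib)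

lemma matrix_diff_rdistrib: "((A :: 'a::ring_1^'n^'m) - B) ** C = A ** C - B ** C"
  by (simp add: matrix_matrix_mult_def vec_eq_iff sum_subtractf left_diff_distrib)

lemma matrix_mul_eq_extend: "A ** B = C \<Longrightarrow> A ** (B ** D) = C ** D"
  by (simp add: matrix_mul_assoc)

lemma linear_le_quadratic_imp_zero:
  fixes c k :: real
  assumes "\<And>t. 2 * t * c \<le> t\<^sup>2 * k"
  shows "c = 0"
proof (rule ccontr)
  assume c: "c \<noteq> 0"
  define s where "s = \<bar>k\<bar> + 1"
  have s: "s > 0" "k \<le> s" unfolding s_def by auto
  define t where "t = c / (2 * s)"
  have "c\<^sup>2 / s = 2 * t * c" unfolding t_def using s by (simp add: power2_eq_square field_simps)
  also have "\<dots> \<le> t\<^sup>2 * k" by (rule assms)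
  also have "\<dots> \<le> t\<^sup>2 * s" using s by (simp add: mult_left_mono)
  also have "\<dots> = c\<^sup>2 / (4 * s)" unfolding t_def using s by (simp add: power2_eq_square field_simps)
  finally show False using c s by (simp add: field_simps)
qed

lemma psd_transpose: "psd A \<Longrightarrow> transpose A = A"
  by (simp add: psd_def)

lemma psd_quadratic_nonneg: "psd A \<Longrightarrow> 0 \<le> x \<bullet> (A *v x)"
  by (simp add: psd_def)

lemma psd_quadratic_eq_0_imp:
  fixes A :: "real^'n^'n"
  assumes "psd A" "x \<bullet> (A *v x) = 0"
  shows "A *v x = 0"
proof -
  have "y \<bullet> (A *v x) = 0" for y
  proof -
    have "2 * t * (- (y \<bullet> (A *v x))) \<le> t\<^sup>2 * (y \<bullet> (A *v y))" for t
    proof -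
      have "0 \<le> (x + t *\<^sub>R y) \<bullet> (A *v (x + t *\<^sub>R y))" using assms(1) by (rule psd_quadratic_nonneg)
      moreover have "x \<bullet> (A *v y) = y \<bullet> (A *v x)"
        by (metis inner_symmetric_matrix psd_transpose[OF assms(1)] inner_commute)
      ultimately show ?thesis using assms(2)
        by (simp add: power2_eq_square algebra_simps)
    qed
    then show ?thesis using linear_le_quadratic_imp_zero by fastforce
  qed
  from this[of "A *v x"] show ?thesis by simp
qed

lemma symmetric_square_mult_eq_0_imp:
  fixes A :: "real^'n^'n"
  assumes "transpose A = A" "(A ** A) *v x = 0"
  shows "A *v x = 0"
proof -
  have "(A *v x) \<bullet> (A *v x) = x \<bullet> ((A ** A) *v x)"
    by (simp add: inner_symmetric_matrix[OF assms(1)] matrix_vector_mul_assoc)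
  then show ?thesis using assms(2) by simp
qed

lemma quadratic_congruence:
  fixes M :: "real^'n^'n" and B :: "real^'m^'n"
  shows "x \<bullet> ((transpose B ** M ** B) *v x) = (B *v x) \<bullet> (M *v (B *v x))"
  using inner_matrix_transpose[of x "transpose B" "M *v (B *v x)"]
  by (simp only: transpose_transpose matrix_vector_mul_assoc matrix_mul_assoc)

lemma psd_congruence:
  fixes M :: "real^'n^'n" and B :: "real^'m^'n"
  assumes "psd M"
  shows "psd (transpose B ** M ** B)"
  unfolding psd_def quadratic_congruence
  using psd_transpose[OF assms] psd_quadratic_nonneg[OF assms]
  by (simp add: matrix_transpose_mul matrix_mul_assoc)

lemma psd_congruence_symmetric:
  fixes M B :: "real^'n^'n"
  assumes "psd M" "transpose B = B"
  shows "psd (B ** M ** B)"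
  using psd_congruence[OF assms(1), of B] assms(2) by simp

section \<open>Spectral theorem for real symmetric matrices\<close>

lemma symmetric_max_quadratic_eigenvector:
  fixes A :: "real^'n^'n"
  assumes sym: "transpose A = A" and V: "subspace V" and inv: "\<And>x. x \<in> V \<Longrightarrow> A *v x \<in> V"
    and v: "v \<in> V" "v \<bullet> v = 1"
    and max: "\<And>y. y \<in> V \<Longrightarrow> y \<bullet> (A *v y) \<le> (v \<bullet> (A *v v)) * (y \<bullet> y)"
  shows "A *v v = (v \<bullet> (A *v v)) *\<^sub>R v"
proof -
  define \<mu> where "\<mu> = v \<bullet> (A *v v)"
  have orth: "w \<bullet> (A *v v) = 0" if "w \<in> V" "w \<bullet> v = 0" for w
  proof -
    have "2 * t * (w \<bullet> (A *v v)) \<le> t\<^sup>2 * (\<mu> * (w \<bullet> w) - w \<bullet> (A *v w))" for t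
    proof -
      have "v + t *\<^sub>R w \<in> V" using that v V by (simp add: subspace_add subspace_scale)
      then have "(v + t *\<^sub>R w) \<bullet> (A *v (v + t *\<^sub>R w)) \<le> \<mu> * ((v + t *\<^sub>R w) \<bullet> (v + t *\<^sub>R w))"
        unfolding \<mu>_def by (rule max)
      moreover have "v \<bullet> (A *v w) = w \<bullet> (A *v v)"
        by (metis inner_symmetric_matrix[OF sym] inner_commute)
      ultimately show ?thesis using that v
        by (simp add: \<mu>_def inner_commute[of w v] power2_eq_square algebra_simps)
    qed
    then show ?thesis by (rule linear_le_quadratic_imp_zero)
  qed
  define w where "w = A *v v - \<mu> *\<^sub>R v"
  have "w \<in> V" unfolding w_def using inv v V by (simp add: subspace_diff subspace_scale)
  moreover have "w \<bullet> v = 0"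
    unfolding w_def using v by (simp add: inner_diff_left \<mu>_def inner_commute[of "A *v v" v])
  ultimately have "w \<bullet> (A *v v) = 0" using orth by blast
  moreover have "w \<bullet> w = w \<bullet> (A *v v) - \<mu> * (w \<bullet> v)"
    by (simp only: w_def[symmetric] inner_diff_right[symmetric] inner_scaleR_right[symmetric])
  ultimately have "w \<bullet> w = 0" using \<open>w \<bullet> v = 0\<close> by simp
  then show ?thesis unfolding w_def \<mu>_def by simp
qed

lemma symmetric_invariant_subspace_has_eigenvector:
  fixes A :: "real^'n^'n"
  assumes sym: "transpose A = A" and V: "subspace V" "V \<noteq> {0}"
    and inv: "\<And>x. x \<in> V \<Longrightarrow> A *v x \<in> V"
  obtains v c where "v \<in> V" "norm v = 1" "A *v v = c *\<^sub>R v"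
proof -
  define K where "K = V \<inter> sphere 0 1"
  obtain a where a: "a \<in> V" "a \<noteq> 0" using V subspace_0 by blast
  have "a /\<^sub>R norm a \<in> K" unfolding K_def using a V by (auto simp: subspace_scale)
  moreover have "compact K" unfolding K_def using closed_subspace[OF V(1)] by (simp add: closed_Int_compact)
  moreover have "continuous_on K (\<lambda>x. x \<bullet> (A *v x))"
    by (intro continuous_intros linear_continuous_on matrix_vector_mul_bounded_linear)
  ultimately obtain v where v: "v \<in> K" and vmax: "\<And>y. y \<in> K \<Longrightarrow> y \<bullet> (A *v y) \<le> v \<bullet> (A *v v)"
    using continuous_attains_sup[of K] by blast
  have "y \<bullet> (A *v y) \<le> (v \<bullet> (A *v v)) * (y \<bullet> y)" if "y \<in> V" for y
  proof (cases "y = 0")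
    case False
    have "y /\<^sub>R norm y \<in> K" unfolding K_def using that False V by (auto simp: subspace_scale)
    then have "(y /\<^sub>R norm y) \<bullet> (A *v (y /\<^sub>R norm y)) \<le> v \<bullet> (A *v v)" by (rule vmax)
    then have "(y \<bullet> (A *v y)) / (norm y)\<^sup>2 \<le> v \<bullet> (A *v v)"
      by (simp add: matrix_vector_mult_scaleR power2_eq_square divide_inverse mult_ac)
    then show ?thesis using False by (simp add: dot_square_norm divide_le_eq)
  qed simp
  moreover have "v \<in> V" "v \<bullet> v = 1" using v unfolding K_def by (auto simp: dot_square_norm)
  ultimately have "A *v v = (v \<bullet> (A *v v)) *\<^sub>R v"
    by (intro symmetric_max_quadratic_eigenvector[OF sym V(1) inv])
  with \<open>v \<in> V\<close> \<open>v \<bullet> v = 1\<close> show ?thesis by (intro that) (auto simp: norm_eq_1)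
qed

lemma symmetric_invariant_subspace_orthonormal_eigenbasis:
  fixes A :: "real^'n^'n"
  assumes sym: "transpose A = A"
  shows "subspace V \<Longrightarrow> (\<And>x. x \<in> V \<Longrightarrow> A *v x \<in> V) \<Longrightarrow>
    \<exists>E. E \<subseteq> V \<and> pairwise orthogonal E \<and> (\<forall>x\<in>E. norm x = 1) \<and> (\<forall>x\<in>E. \<exists>c. A *v x = c *\<^sub>R x)
      \<and> span E = V"
proof (induction "dim V" arbitrary: V rule: less_induct)
  case less
  show ?case
  proof (cases "V = {0}")
    case True
    show ?thesis by (rule exI[of _ "{}"]) (simp add: True)
  next
    case False
    then obtain v c where v: "v \<in> V" "norm v = 1" "A *v v = c *\<^sub>R v"
      using symmetric_invariant_subspace_has_eigenvector[OF sym less(2)] less(3) by metis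
    define V' where "V' = {x\<in>V. x \<bullet> v = 0}"
    have "subspace V'" unfolding V'_def using less(2) by (auto simp: subspace_def inner_add_left)
    moreover have "A *v x \<in> V'" if "x \<in> V'" for x
      using that less(3) v(3) inner_symmetric_matrix[OF sym, of x v] unfolding V'_def by auto
    moreover have "dim V' < dim V"
    proof -
      have "V' \<subseteq> V" "v \<notin> V'" using v unfolding V'_def by (auto simp: norm_eq_1)
      then have "V' \<subset> V" using v by blast
      then show ?thesis
        using dim_psubset[of V' V] \<open>subspace V'\<close> less(2) by (simp add: span_eq_iff[THEN iffD2])
    qed
    ultimately obtain E' where E': "E' \<subseteq> V'" "pairwise orthogonal E'" "\<forall>x\<in>E'. norm x = 1"
      "\<forall>x\<in>E'. \<exists>c. A *v x = c *\<^sub>R x" "span E' = V'"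
      using less(1) by blast
    have "V \<subseteq> span (insert v E')"
    proof
      fix x assume "x \<in> V"
      have "x - (x \<bullet> v) *\<^sub>R v \<in> V'" unfolding V'_def using \<open>x \<in> V\<close> v less(2)
        by (simp add: subspace_diff subspace_scale inner_diff_left norm_eq_1)
      then have "x - (x \<bullet> v) *\<^sub>R v \<in> span (insert v E')"
        using E'(5) by (metis span_mono subset_insertI subsetD)
      moreover have "(x \<bullet> v) *\<^sub>R v \<in> span (insert v E')" by (simp add: span_base span_scale)
      ultimately show "x \<in> span (insert v E')" by (metis span_add diff_add_cancel)
    qed
    moreover have "insert v E' \<subseteq> V" using E'(1) v unfolding V'_def by auto
    ultimately show ?thesis using E' v less(2)
      by (intro exI[of _ "insert v E'"])
        (auto simp: pairwise_insert V'_def orthogonal_def inner_commute span_minimal subset_antisym)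
  qed
qed

definition diag_matrix :: "('n::finite \<Rightarrow> real) \<Rightarrow> real^'n^'n" where
  "diag_matrix d = (\<chi> i j. if i = j then d i else 0)"

lemma matrix_mul_diag_matrix_nth: "(A ** diag_matrix d) $ i $ j = A $ i $ j * d j"
  by (simp add: diag_matrix_def matrix_matrix_mult_def if_distrib if_distribR cong: if_cong)

lemma diag_matrix_mul_nth: "(diag_matrix d ** A) $ i $ j = d i * A $ i $ j"
  by (simp add: diag_matrix_def matrix_matrix_mult_def if_distrib if_distribR cong: if_cong)

lemma diag_matrix_mult: "diag_matrix d ** diag_matrix e = diag_matrix (\<lambda>i. d i * e i)"
  by (simp add: vec_eq_iff matrix_mul_diag_matrix_nth) (simp add: diag_matrix_def)

lemma transpose_diag_matrix: "transpose (diag_matrix d) = diag_matrix d"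
  by (simp add: vec_eq_iff transpose_def diag_matrix_def)

lemma diag_matrix_quadratic_nonneg:
  assumes "\<And>i. 0 \<le> d i"
  shows "0 \<le> y \<bullet> (diag_matrix d *v y)"
proof -
  have "(diag_matrix d *v y) $ i = d i * y $ i" for i
    by (simp add: diag_matrix_def matrix_vector_mult_def if_distrib if_distribR cong: if_cong)
  moreover have "0 \<le> y $ i * (d i * y $ i)" for i
    using assms[of i] by (metis mult.left_commute mult_nonneg_nonneg zero_le_square)
  ultimately show ?thesis unfolding inner_vec_def by (simp add: sum_nonneg)
qed

lemma matrix_nth_diag_eq_inner_axis: "A $ i $ i = axis i 1 \<bullet> (A *v axis i (1::real))"
  unfolding inner_axis' by (simp add: matrix_vector_mult_def axis_def if_distrib if_distribR cong: if_cong)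

definition orth_diag :: "real^'n^'n \<Rightarrow> ('n::finite \<Rightarrow> real) \<Rightarrow> real^'n^'n" where
  "orth_diag U d = U ** diag_matrix d ** transpose U"

lemma orthogonal_matrix_mul_cancel:
  assumes "orthogonal_matrix U"
  shows "transpose U ** U = mat 1" "U ** transpose U = mat 1"
    "transpose U ** (U ** A) = A" "U ** (transpose U ** A) = A"
  using assms unfolding orthogonal_matrix_def by (simp_all add: matrix_mul_assoc)

lemma orth_diag_mult:
  assumes "orthogonal_matrix U"
  shows "orth_diag U d ** orth_diag U e = orth_diag U (\<lambda>i. d i * e i)"
  by (simp add: orthogonal_matrix_mul_cancel[OF assms] orth_diag_def matrix_mul_assoc[symmetric]
      diag_matrix_mult[symmetric])

lemma transpose_orth_diag: "transpose (orth_diag U d) = orth_diag U d"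
  by (simp add: orth_diag_def matrix_transpose_mul transpose_diag_matrix matrix_mul_assoc)

lemma psd_orth_diag:
  assumes "\<And>i. 0 \<le> d i"
  shows "psd (orth_diag U d)"
  unfolding psd_def
proof (intro conjI allI)
  show "transpose (orth_diag U d) = orth_diag U d" by (rule transpose_orth_diag)
  fix x
  have "x \<bullet> (orth_diag U d *v x) = (transpose U *v x) \<bullet> (diag_matrix d *v (transpose U *v x))"
    by (simp add: orth_diag_def matrix_vector_mul_assoc[symmetric] inner_matrix_transpose)
  also have "\<dots> \<ge> 0" using assms by (rule diag_matrix_quadratic_nonneg)
  finally show "0 \<le> x \<bullet> (orth_diag U d *v x)" .
qed

lemma orth_diag_conj:
  assumes "orthogonal_matrix U"
  shows "transpose U ** orth_diag U d ** U = diag_matrix d"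
  by (simp add: orth_diag_def matrix_mul_assoc[symmetric] orthogonal_matrix_mul_cancel[OF assms])

text \<open>A matrix commuting with \<open>orth_diag U d\<close> has no entries (in the basis \<open>U\<close>) linking distinct
  eigenvalues, hence commutes with every function of it.\<close>

lemma orth_diag_commute_fun:
  assumes U: "orthogonal_matrix U" and comm: "A ** orth_diag U d = orth_diag U d ** A"
  shows "A ** orth_diag U (\<lambda>i. f (d i)) = orth_diag U (\<lambda>i. f (d i)) ** A"
proof -
  define A' where "A' = transpose U ** A ** U"
  have A: "A = U ** A' ** transpose U"
    unfolding A'_def by (simp add: orthogonal_matrix_mul_cancel[OF U] matrix_mul_assoc[symmetric])
  have "A' ** diag_matrix d = transpose U ** (A ** orth_diag U d) ** U"
    unfolding A'_def orth_diag_def by (simp add: orthogonal_matrix_mul_cancel[OF U] matrix_mul_assoc[symmetric])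
  also have "\<dots> = transpose U ** (orth_diag U d ** A) ** U" by (simp only: comm)
  also have "\<dots> = diag_matrix d ** A'"
    unfolding A'_def orth_diag_def by (simp add: orthogonal_matrix_mul_cancel[OF U] matrix_mul_assoc[symmetric])
  finally have "A' $ i $ j * d j = d i * A' $ i $ j" for i j
    by (metis diag_matrix_mul_nth matrix_mul_diag_matrix_nth)
  then have "A' $ i $ j = 0 \<or> d i = d j" for i j by (metis mult.commute mult_cancel_left)
  then have "A' $ i $ j * f (d j) = f (d i) * A' $ i $ j" for i j by (metis mult.commute mult_zero_left)
  then have "A' ** diag_matrix (\<lambda>i. f (d i)) = diag_matrix (\<lambda>i. f (d i)) ** A'"
    by (simp add: vec_eq_iff diag_matrix_mul_nth matrix_mul_diag_matrix_nth)
  then show ?thesis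
    unfolding A orth_diag_def
    by (simp add: orthogonal_matrix_mul_cancel[OF U] matrix_mul_assoc[symmetric]) (simp add: matrix_mul_assoc)
qed

theorem symmetric_spectral:
  fixes A :: "real^'n^'n"
  assumes sym: "transpose A = A"
  obtains U d where "orthogonal_matrix U" "A = orth_diag U d"
proof -
  obtain E where E: "pairwise orthogonal E" "\<forall>x\<in>E. norm x = 1"
    "\<forall>x\<in>E. \<exists>c. A *v x = c *\<^sub>R x" "span E = UNIV"
    using symmetric_invariant_subspace_orthonormal_eigenbasis[OF sym, of UNIV] by auto
  have "independent E" using E(1,2) pairwise_orthogonal_independent by fastforce
  then have "finite E" "card E = CARD('n)"
    using finiteI_independent dim_span_eq_card_independent E(4) by fastforce+
  then obtain f where f: "bij_betw f (UNIV::'n set) E"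
    by (metis finite_class.finite_UNIV finite_same_card_bij)
  have fE: "f i \<in> E" for i using f by (auto simp: bij_betw_def)
  have "orthogonal (f i) (f j)" if "i \<noteq> j" for i j
    using E(1) fE f that unfolding pairwise_def bij_betw_def by (metis inj_eq)
  define U where "U = (\<chi> i j. f j $ i)"
  have U: "orthogonal_matrix U"
    unfolding U_def orthogonal_matrix_orthonormal_columns column_def
    using E(2) fE \<open>\<And>i j. i \<noteq> j \<Longrightarrow> orthogonal (f i) (f j)\<close> by simp
  define d where "d j = (SOME c. A *v f j = c *\<^sub>R f j)" for j
  have eig: "A *v f j = d j *\<^sub>R f j" for j
    unfolding d_def by (rule someI_ex) (use E(3) fE in blast)
  have "(A ** U) $ i $ j = (U ** diag_matrix d) $ i $ j" for i j
  proof -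
    have "(A ** U) $ i $ j = (A *v f j) $ i"
      by (simp add: U_def matrix_matrix_mult_def matrix_vector_mult_def)
    then show ?thesis by (simp add: eig matrix_mul_diag_matrix_nth U_def)
  qed
  then have "A ** U = U ** diag_matrix d" by (simp add: vec_eq_iff)
  then have "A = orth_diag U d"
    using orthogonal_matrix_mul_cancel(2)[OF U] by (metis orth_diag_def matrix_mul_assoc matrix_mul_rid)
  with U show ?thesis by (rule that)
qed

lemma psd_spectral:
  fixes A :: "real^'n^'n"
  assumes "psd A"
  obtains U d where "orthogonal_matrix U" "A = orth_diag U d" "\<And>i. 0 \<le> d i"
proof -
  obtain U d where U: "orthogonal_matrix U" "A = orth_diag U d"
    using symmetric_spectral psd_transpose[OF assms] by blast
  have "0 \<le> d i" for i
  proof -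
    have "d i = (transpose U ** A ** U) $ i $ i"
      using orth_diag_conj[OF U(1)] U(2) by (simp add: diag_matrix_def)
    also have "\<dots> = axis i 1 \<bullet> (transpose U *v (A *v (U *v axis i 1)))"
      by (simp add: matrix_nth_diag_eq_inner_axis matrix_vector_mul_assoc matrix_mul_assoc)
    also have "\<dots> = (U *v axis i 1) \<bullet> (A *v (U *v axis i 1))"
      using inner_matrix_transpose[of "axis i 1" "transpose U"] by simp
    also have "\<dots> \<ge> 0" using assms by (rule psd_quadratic_nonneg)
    finally show ?thesis .
  qed
  with U show ?thesis by (rule that)
qed

section \<open>Square roots and pseudoinverses of PSD matrices\<close>

text \<open>A PSD root \<open>X\<close> of \<open>A\<close> commutes with \<open>A\<close>, hence with the spectral root \<open>S\<close>; then
  \<open>(X + S) (X - S) = 0\<close>, and positivity forces \<open>X = S\<close>.\<close>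

lemma psd_sqrt_orth_diag:
  fixes A :: "real^'n^'n"
  assumes U: "orthogonal_matrix U" and A: "A = orth_diag U d" and d: "\<And>i. 0 \<le> d i"
  shows "psd_sqrt A = orth_diag U (\<lambda>i. sqrt (d i))"
  unfolding psd_sqrt_def
proof (rule the_equality)
  define S where "S = orth_diag U (\<lambda>i. sqrt (d i))"
  have S: "psd S" "S ** S = A" unfolding S_def A using d by (simp_all add: psd_orth_diag orth_diag_mult[OF U])
  then show "psd S \<and> S ** S = A" by blast
  fix X assume "psd X \<and> X ** X = A"
  then have X: "psd X" "X ** X = A" by auto
  have "X ** A = A ** X" using X by (metis matrix_mul_assoc)
  then have XS: "X ** S = S ** X" unfolding S_def A by (rule orth_diag_commute_fun[OF U])
  have "(X - S) *v y = 0" for y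
  proof -
    define z where "z = (X - S) *v y"
    have "X *v z + S *v z = (X ** X - S ** S + (S ** X - X ** S)) *v y"
      unfolding z_def by (simp add: matrix_vector_mult_diff_distrib matrix_vector_mult_diff_rdistrib
        matrix_vector_mult_add_rdistrib matrix_vector_mul_assoc)
    also have "\<dots> = 0" using XS X S by simp
    finally have "z \<bullet> (X *v z) + z \<bullet> (S *v z) = 0" by (metis inner_add_right inner_zero_right)
    moreover have "0 \<le> z \<bullet> (X *v z)" "0 \<le> z \<bullet> (S *v z)" using X S by (simp_all add: psd_quadratic_nonneg)
    ultimately have "X *v z = 0" "S *v z = 0" using psd_quadratic_eq_0_imp X S by (metis add_nonneg_eq_0_iff)+
    then have "(X - S) *v z = 0" by (simp add: matrix_vector_mult_diff_rdistrib)
    moreover have "transpose (X - S) = X - S"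
      using psd_transpose[OF X(1)] psd_transpose[OF S(1)] by (simp add: transpose_diff)
    ultimately have "z \<bullet> z = 0" unfolding z_def by (metis inner_matrix_transpose inner_zero_right)
    then show ?thesis unfolding z_def by simp
  qed
  then show "X = S" using matrix_eq by (metis eq_iff_diff_eq_0 matrix_vector_mult_0)
qed

lemma pinv_unique:
  fixes A :: "real^'n^'m" and X Y :: "real^'m^'n"
  assumes X: "A ** X ** A = A" "X ** A ** X = X" "transpose (A ** X) = A ** X" "transpose (X ** A) = X ** A"
  assumes Y: "A ** Y ** A = A" "Y ** A ** Y = Y" "transpose (A ** Y) = A ** Y" "transpose (Y ** A) = Y ** A"
  shows "X = Y"
proof -
  have "X = X ** transpose (A ** X)" using X(2,3) by (simp only: matrix_mul_assoc)
  also have "\<dots> = X ** transpose (A ** Y ** (A ** X))" using Y(1) by (simp only: matrix_mul_assoc)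
  also have "\<dots> = X ** (transpose (A ** X) ** transpose (A ** Y))" by (simp only: matrix_transpose_mul)
  also have "\<dots> = (X ** (A ** X)) ** (A ** Y)" using X(3) Y(3) by (simp only: matrix_mul_assoc)
  finally have XAY: "X = X ** A ** Y" using X(2) by (simp only: matrix_mul_assoc)
  have "Y = transpose (Y ** A) ** Y" using Y(2,4) by simp
  also have "\<dots> = transpose (Y ** (A ** X ** A)) ** Y" using X(1) by simp
  also have "\<dots> = transpose ((Y ** A) ** (X ** A)) ** Y" by (simp only: matrix_mul_assoc)
  also have "\<dots> = (transpose (X ** A) ** transpose (Y ** A)) ** Y" by (simp only: matrix_transpose_mul)
  also have "\<dots> = (X ** A) ** (Y ** A ** Y)" using X(4) Y(4) by (simp only: matrix_mul_assoc)
  also have "\<dots> = X ** A ** Y" using Y(2) by simp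
  finally show ?thesis using XAY by metis
qed

lemma pinv_eqI:
  fixes A :: "real^'n^'m" and X :: "real^'m^'n"
  assumes "A ** X ** A = A" "X ** A ** X = X" "transpose (A ** X) = A ** X" "transpose (X ** A) = X ** A"
  shows "pinv A = X"
  unfolding pinv_def
proof (rule the_equality)
  fix Y assume "A ** Y ** A = A \<and> Y ** A ** Y = Y \<and> transpose (A ** Y) = A ** Y \<and> transpose (Y ** A) = Y ** A"
  then show "Y = X" using pinv_unique[OF assms] by (metis (no_types))
qed (use assms in blast)

lemma mult_inverse_mult_cancel:
  fixes a :: "'a::division_ring"
  shows "a * inverse a * a = a" "inverse a * a * inverse a = inverse a"
  by (cases "a = 0"; simp)+

lemma pinv_orth_diag:
  assumes U: "orthogonal_matrix U"
  shows "pinv (orth_diag U d) = orth_diag U (\<lambda>i. inverse (d i))"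
  by (rule pinv_eqI) (simp_all add: orth_diag_mult[OF U] transpose_orth_diag mult_inverse_mult_cancel)

lemma psd_spectral_pinv:
  fixes A :: "real^'n^'n"
  assumes "psd A"
  obtains U d where "orthogonal_matrix U" "A = orth_diag U d" "\<And>i. 0 \<le> d i"
    "pinv A = orth_diag U (\<lambda>i. inverse (d i))"
  using psd_spectral[OF assms] pinv_orth_diag by metis

lemma psd_pinv: "psd A \<Longrightarrow> psd (pinv A)"
  by (metis psd_spectral_pinv psd_orth_diag inverse_nonnegative_iff_nonnegative)

lemma psd_pinv_commute: "psd A \<Longrightarrow> A ** pinv A = pinv A ** A"
  by (elim psd_spectral_pinv) (simp add: orth_diag_mult mult.commute)

lemma psd_mult_pinv_mult:
  assumes "psd A"
  shows "A ** pinv A ** A = A" "pinv A ** A ** pinv A = pinv A"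
proof -
  obtain U d where U: "orthogonal_matrix U" "A = orth_diag U d"
    "pinv A = orth_diag U (\<lambda>i. inverse (d i))"
    using psd_spectral_pinv[OF assms] by metis
  show "A ** pinv A ** A = A" "pinv A ** A ** pinv A = pinv A"
    unfolding U(3) by (simp_all add: U(2) orth_diag_mult[OF U(1)] mult_inverse_mult_cancel)
qed

lemma psd_mult_pinv_symmetric:
  assumes "psd A"
  shows "transpose (A ** pinv A) = A ** pinv A"
  using psd_pinv_commute[OF assms] psd_transpose[OF assms] psd_transpose[OF psd_pinv[OF assms]]
  by (simp add: matrix_transpose_mul)

lemma psd_pinv_projection_laws:
  assumes "psd A"
  shows "pinv A ** A = A ** pinv A" "A ** pinv A ** A = A" "A ** (A ** pinv A) = A"
    "pinv A ** (A ** pinv A) = pinv A" "A ** pinv A ** pinv A = pinv A"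
    "A ** pinv A ** (A ** pinv A) = A ** pinv A"
  using psd_pinv_commute[OF assms] psd_mult_pinv_mult[OF assms]
  by (simp_all add: matrix_mul_assoc) (metis matrix_mul_assoc)+

lemma psd_spectral_sqrt:
  fixes A :: "real^'n^'n"
  assumes "psd A"
  obtains U d where "orthogonal_matrix U" "A = orth_diag U d" "\<And>i. 0 \<le> d i"
    "psd_sqrt A = orth_diag U (\<lambda>i. sqrt (d i))" "pinv A = orth_diag U (\<lambda>i. inverse (d i))"
  using psd_spectral_pinv[OF assms] psd_sqrt_orth_diag by metis

lemma psd_psd_sqrt: "psd A \<Longrightarrow> psd (psd_sqrt A)"
  by (elim psd_spectral_sqrt) (simp add: psd_orth_diag)

lemma psd_sqrt_square: "psd A \<Longrightarrow> psd_sqrt A ** psd_sqrt A = A"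
  by (elim psd_spectral_sqrt) (simp add: orth_diag_mult)

lemma pinv_psd_sqrt_square: "psd A \<Longrightarrow> pinv (psd_sqrt A) ** pinv (psd_sqrt A) = pinv A"
  by (elim psd_spectral_sqrt) (simp add: pinv_orth_diag orth_diag_mult flip: inverse_mult_distrib)

lemma psd_sqrt_mult_pinv:
  assumes "psd A"
  shows "psd_sqrt A ** pinv (psd_sqrt A) = A ** pinv A"
proof -
  obtain U d where U: "orthogonal_matrix U" "A = orth_diag U d"
    "psd_sqrt A = orth_diag U (\<lambda>i. sqrt (d i))" "pinv A = orth_diag U (\<lambda>i. inverse (d i))"
    using psd_spectral_sqrt[OF assms] by metis
  have "sqrt (d i) * inverse (sqrt (d i)) = d i * inverse (d i)" for i by (cases "d i = 0") auto
  then show ?thesis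
    unfolding U(3,4) pinv_orth_diag[OF U(1)] by (simp add: U(2) orth_diag_mult[OF U(1)])
qed

lemma col_space_psd_sqrt:
  assumes "psd A"
  shows "col_space (psd_sqrt A) = col_space A"
proof -
  define R where "R = psd_sqrt A"
  have "R = A ** pinv A ** R"
    using psd_mult_pinv_mult[OF psd_psd_sqrt[OF assms]] psd_sqrt_mult_pinv[OF assms] by (simp add: R_def)
  then have "R *v x = A *v (pinv A *v (R *v x))" for x by (metis matrix_vector_mul_assoc)
  moreover have "A *v x = R *v (R *v x)" for x
    using psd_sqrt_square[OF assms] by (simp add: R_def matrix_vector_mul_assoc)
  ultimately show ?thesis unfolding col_space_def R_def[symmetric] by blast
qed

text \<open>Range inclusion \<open>Im C \<subseteq> Im A\<close>, phrased dually as \<open>ker A \<subseteq> ker C\<^sup>T\<close>.\<close>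

lemma psd_pinv_absorb:
  fixes A :: "real^'n^'n" and C :: "real^'m^'n"
  assumes A: "psd A" and ker: "\<And>w. A *v w = 0 \<Longrightarrow> transpose C *v w = 0"
  shows "A ** pinv A ** C = C"
  unfolding matrix_eq
proof
  fix x
  define P where "P = A ** pinv A"
  have P: "transpose P = P" "P ** P = P" "A ** P = A"
    unfolding P_def using psd_mult_pinv_symmetric[OF A] psd_mult_pinv_mult(1)[OF A] psd_pinv_commute[OF A]
    by (simp_all add: matrix_mul_assoc) (metis matrix_mul_assoc)
  define v where "v = C *v x"
  define w where "w = v - P *v v"
  have "A *v w = 0" unfolding w_def using P(3)
    by (simp add: matrix_vector_mult_diff_distrib matrix_vector_mul_assoc)
  then have "w \<bullet> v = 0" using ker unfolding v_def by (simp add: inner_matrix_transpose)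
  moreover have "w \<bullet> (P *v v) = 0" unfolding w_def using P(1,2)
    by (simp add: inner_symmetric_matrix[symmetric] matrix_vector_mult_diff_distrib matrix_vector_mul_assoc)
  ultimately have "w \<bullet> w = 0" by (simp add: w_def inner_diff_right)
  then show "(A ** pinv A ** C) *v x = C *v x"
    unfolding P_def[symmetric] by (simp add: w_def v_def matrix_vector_mul_assoc[symmetric])
qed

lemma psd_pinv_projection_eq:
  fixes A C :: "real^'n^'n"
  assumes A: "psd A" and C: "psd C" and ker: "\<And>w. A *v w = 0 \<longleftrightarrow> C *v w = 0"
  shows "A ** pinv A = C ** pinv C"
proof -
  have AC: "A ** pinv A ** C = C" using ker psd_transpose[OF C] by (intro psd_pinv_absorb[OF A]) auto
  have CA: "C ** pinv C ** A = A" using ker psd_transpose[OF A] by (intro psd_pinv_absorb[OF C]) auto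
  have "A ** pinv A = transpose (C ** pinv C ** (A ** pinv A))"
    using CA psd_mult_pinv_symmetric[OF A] by (simp add: matrix_mul_assoc)
  also have "\<dots> = A ** pinv A ** (C ** pinv C)"
    using psd_mult_pinv_symmetric[OF A] psd_mult_pinv_symmetric[OF C] by (simp add: matrix_transpose_mul)
  also have "\<dots> = C ** pinv C" using AC by (simp add: matrix_mul_assoc)
  finally show ?thesis .
qed

lemma psd_congruence_pinv_absorb:
  fixes M :: "real^'n^'n" and B :: "real^'m^'n"
  assumes "psd M"
  defines "Y \<equiv> transpose B ** M ** B"
  shows "Y ** pinv Y ** (transpose B ** M) = transpose B ** M"
proof (rule psd_pinv_absorb)
  show "psd Y" unfolding Y_def using assms(1) by (rule psd_congruence)
  fix w assume "Y *v w = 0"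
  then have "(B *v w) \<bullet> (M *v (B *v w)) = 0"
    by (metis Y_def quadratic_congruence inner_zero_right)
  then have "M *v (B *v w) = 0" by (rule psd_quadratic_eq_0_imp[OF assms(1)])
  then show "transpose (transpose B ** M) *v w = 0"
    using psd_transpose[OF assms(1)] by (simp add: matrix_transpose_mul matrix_vector_mul_assoc)
qed

lemma psd_inner_le_quadratic:
  fixes Q :: "real^'n^'n"
  assumes Q: "psd Q" and a: "a \<bullet> (Q *v a) = c" "a \<bullet> (Q *v x) = c"
  shows "c \<le> x \<bullet> (Q *v x)"
proof -
  define T where "T = psd_sqrt Q"
  have T: "psd T" "T ** T = Q" unfolding T_def using Q by (simp_all add: psd_psd_sqrt psd_sqrt_square)
  have Q_inner: "y \<bullet> (Q *v z) = (T *v y) \<bullet> (T *v z)" for y z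
    using inner_symmetric_matrix[OF psd_transpose[OF T(1)]] T(2) by (metis matrix_vector_mul_assoc)
  have "c\<^sup>2 \<le> c * (x \<bullet> (Q *v x))"
  proof -
    have "((T *v a) \<bullet> (T *v x))\<^sup>2 \<le> (norm (T *v a) * norm (T *v x))\<^sup>2"
      using Cauchy_Schwarz_ineq2 by (metis abs_ge_zero power2_abs power_mono)
    then show ?thesis using a unfolding Q_inner by (simp add: power_mult_distrib dot_square_norm)
  qed
  moreover have "0 \<le> c" using a(1) psd_quadratic_nonneg[OF Q] by metis
  ultimately show ?thesis by (cases "c = 0") (use psd_quadratic_nonneg[OF Q] in \<open>auto simp: power2_eq_square\<close>)
qed

section \<open>Weak duality\<close>

lemma trace_transpose: "trace (transpose A) = trace (A :: 'a::semiring_1^'n^'n)"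
  by (simp add: trace_def transpose_def)

lemma trace_scaleR: "trace (c *\<^sub>R A) = c * trace (A :: real^'n^'n)"
  by (simp add: trace_def sum_distrib_left)

lemma trace_psd_nonneg:
  fixes A :: "real^'n^'n"
  assumes "psd A"
  shows "0 \<le> trace A"
  unfolding trace_def matrix_nth_diag_eq_inner_axis
  using psd_quadratic_nonneg[OF assms] by (simp add: sum_nonneg)

lemma trace_mult_psd_nonneg:
  fixes S C :: "real^'n^'n"
  assumes "psd S" "psd C"
  shows "0 \<le> trace (S ** C)"
proof -
  define T where "T = psd_sqrt S"
  have T: "psd T" "T ** T = S" unfolding T_def using assms(1) by (simp_all add: psd_psd_sqrt psd_sqrt_square)
  have "trace (S ** C) = trace (T ** (T ** C))" using T(2) by (simp add: matrix_mul_assoc)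
  also have "\<dots> = trace (T ** C ** T)" by (rule trace_mul_sym)
  also have "\<dots> \<ge> 0"
    using psd_congruence_symmetric[OF assms(2) psd_transpose[OF T(1)]] by (rule trace_psd_nonneg)
  finally show ?thesis .
qed

lemma duality_gap_eq:
  fixes Q M B S S' P :: "real^'n^'n"
  assumes M: "psd M" and B: "transpose B = B" and S: "transpose S = S" and S': "transpose S' = S'"
    and S'SS': "S' ** S ** S' = S'" and BM: "B ** M = S ** S' ** B ** M"
    and PM: "transpose P = M ** pinv M ** transpose P"
  defines "W \<equiv> transpose P - M ** B ** S'"
  shows "trace (Q ** S) + trace (M ** (B ** S' ** B)) - trace (2 *\<^sub>R (P ** B))
    = trace (S ** (Q - P ** pinv M ** transpose P)) + trace (S ** (transpose W ** pinv M ** W))"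
proof -
  define Mp where "Mp = pinv M"
  define K where "K = M ** B ** S'"
  have M_sym: "transpose M = M" and Mp_sym: "transpose Mp = Mp"
    unfolding Mp_def using M psd_pinv[OF M] by (simp_all add: psd_transpose)
  have PMpM: "P ** Mp ** M = P"
    using arg_cong[OF PM, of transpose] M_sym Mp_sym by (simp add: Mp_def matrix_transpose_mul matrix_mul_assoc)
  have MBS'S: "M ** B ** S' ** S = M ** B"
    using arg_cong[OF BM, of transpose] M_sym B S S' by (simp add: matrix_transpose_mul matrix_mul_assoc)
  have KS: "trace (S ** (P ** Mp ** K)) = trace (P ** B)"
  proof -
    have "trace (S ** (P ** Mp ** K)) = trace (P ** Mp ** K ** S)" by (rule trace_mul_sym)
    also have "\<dots> = trace (P ** Mp ** (M ** B ** S' ** S))" unfolding K_def by (simp add: matrix_mul_assoc)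
    also have "\<dots> = trace (P ** B)" using MBS'S PMpM by (simp add: matrix_mul_assoc)
    finally show ?thesis .
  qed
  have KS': "trace (S ** (transpose K ** Mp ** transpose P)) = trace (S ** (P ** Mp ** K))"
  proof -
    have "transpose (S ** (transpose K ** Mp ** transpose P)) = P ** Mp ** K ** S"
      using S Mp_sym by (simp add: matrix_transpose_mul matrix_mul_assoc)
    then show ?thesis by (metis trace_transpose trace_mul_sym)
  qed
  have KK: "trace (S ** (transpose K ** Mp ** K)) = trace (M ** (B ** S' ** B))"
  proof -
    have "transpose K = S' ** B ** M"
      unfolding K_def using M_sym B S' by (simp add: matrix_transpose_mul matrix_mul_assoc)
    then have "trace (S ** (transpose K ** Mp ** K)) = trace (S' ** (S ** S' ** B ** (M ** Mp ** M) ** B))"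
      unfolding K_def by (simp add: trace_mul_sym[of _ S'] matrix_mul_assoc)
    also have "\<dots> = trace ((S' ** S ** S') ** B ** M ** B)"
      using psd_mult_pinv_mult(1)[OF M] by (simp add: Mp_def matrix_mul_assoc)
    also have "\<dots> = trace ((S' ** B) ** (M ** B))" using S'SS' by (simp add: matrix_mul_assoc)
    also have "\<dots> = trace (M ** (B ** S' ** B))"
      using trace_mul_sym[of "S' ** B" "M ** B"] by (simp add: matrix_mul_assoc)
    finally show ?thesis .
  qed
  show ?thesis
    unfolding W_def K_def[symmetric] Mp_def[symmetric] using KS KS' KK
    by (simp add: transpose_diff matrix_diff_ldistrib matrix_diff_rdistrib trace_sub trace_scaleR
        trace_mul_sym[of Q S])
qed

theorem weak_duality:
  fixes Q M B S S' P :: "real^'n^'n"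
  assumes M: "psd M" and B: "transpose B = B" and S: "psd S" and S': "transpose S' = S'"
    and S'SS': "S' ** S ** S' = S'" and BM: "B ** M = S ** S' ** B ** M"
    and P: "psd (Q - P ** pinv M ** transpose P)" "transpose P = M ** pinv M ** transpose P"
  shows "trace (2 *\<^sub>R (P ** B)) \<le> trace (Q ** S) + trace (M ** (B ** S' ** B))"
  using duality_gap_eq[OF M B psd_transpose[OF S] S' S'SS' BM P(2), of Q]
    trace_mult_psd_nonneg[OF S P(1)]
    trace_mult_psd_nonneg[OF S psd_congruence[OF psd_pinv[OF M], of "transpose P - M ** B ** S'"]]
  by linarith

section \<open>The optimal points\<close>

locale trace_duality =
  fixes Q M B :: "real^'n^'n"
  assumes psd_Q: "psd Q" and psd_M: "psd M" and B_sym: "transpose B = B"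
    and col_space_BMB: "col_space (B ** M ** B) \<subseteq> col_space Q"
  fixes R X P :: "real^'n^'n"
  defines "R \<equiv> psd_sqrt (B ** M ** B)" and "X \<equiv> psd_sqrt (R ** Q ** R)" and "P \<equiv> R ** pinv R"
begin

lemma psd_BMB: "psd (B ** M ** B)"
  using psd_congruence_symmetric[OF psd_M B_sym] .

lemma psd_R: "psd R" and R_square: "R ** R = B ** M ** B"
  unfolding R_def using psd_BMB by (simp_all add: psd_psd_sqrt psd_sqrt_square)

lemma psd_RQR: "psd (R ** Q ** R)"
  using psd_congruence_symmetric[OF psd_Q psd_transpose[OF psd_R]] .

lemma psd_X: "psd X" and X_square: "X ** X = R ** Q ** R"
  unfolding X_def using psd_RQR by (simp_all add: psd_psd_sqrt psd_sqrt_square)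

lemma kernel_X_iff_kernel_R: "X *v w = 0 \<longleftrightarrow> R *v w = 0"
proof
  assume "X *v w = 0"
  then have "(R ** Q ** R) *v w = 0" by (metis X_square matrix_vector_mul_assoc matrix_vector_mult_0_right)
  then have "(R *v w) \<bullet> (Q *v (R *v w)) = 0"
    using quadratic_congruence[of w R Q] psd_transpose[OF psd_R] by simp
  then have QRw: "Q *v (R *v w) = 0" by (rule psd_quadratic_eq_0_imp[OF psd_Q])
  have "R *v w \<in> col_space Q"
    using col_space_BMB col_space_psd_sqrt[OF psd_BMB] unfolding R_def col_space_def by blast
  then obtain u where u: "R *v w = Q *v u" unfolding col_space_def by blast
  have "(Q *v u) \<bullet> (Q *v u) = u \<bullet> (Q *v (R *v w))"
    by (simp add: u inner_symmetric_matrix[OF psd_transpose[OF psd_Q]])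
  then show "R *v w = 0" using QRw u by simp
next
  assume "R *v w = 0"
  then have "(X ** X) *v w = 0" by (simp add: X_square matrix_vector_mul_assoc[symmetric])
  then show "X *v w = 0" by (rule symmetric_square_mult_eq_0_imp[OF psd_transpose[OF psd_X]])
qed

lemma R_mult_pinv: "R ** pinv R = P"
  by (simp add: P_def)

lemma X_mult_pinv: "X ** pinv X = P"
  unfolding P_def by (rule psd_pinv_projection_eq[OF psd_X psd_R kernel_X_iff_kernel_R])

lemma P_mult_BM: "P ** (B ** M) = B ** M"
  using psd_congruence_pinv_absorb[OF psd_M, of B] psd_sqrt_mult_pinv[OF psd_BMB]
  by (simp add: B_sym P_def R_def matrix_mul_assoc)

text \<open>Rewriting right-nested products with these rules normalises all the matrix identities below.\<close>

lemmas absorb = psd_pinv_projection_laws[OF psd_R, folded P_def]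
  psd_pinv_projection_laws(1-5)[OF psd_X, unfolded X_mult_pinv] X_mult_pinv R_mult_pinv P_mult_BM
  R_square[unfolded matrix_mul_assoc[symmetric], symmetric]
  X_square[unfolded matrix_mul_assoc[symmetric], symmetric]
  psd_mult_pinv_mult(1)[OF psd_M, unfolded matrix_mul_assoc[symmetric]]

lemmas absorb_simps = absorb absorb[THEN matrix_mul_eq_extend, unfolded matrix_mul_assoc[symmetric]]
  matrix_mul_assoc[symmetric]

lemma pinv_R_square: "pinv (R ** R) = pinv R ** pinv R"
  using pinv_psd_sqrt_square[OF psd_BMB] R_square by (simp add: R_def)

lemma R_sym: "transpose R = R" and X_sym: "transpose X = X"
  and pinv_R_sym: "transpose (pinv R) = pinv R" and pinv_X_sym: "transpose (pinv X) = pinv X"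
  using psd_R psd_X by (simp_all add: psd_transpose psd_pinv)

lemma optimal_pair_feasible:
  shows "psd (R ** pinv X ** R)" "psd (pinv R ** X ** pinv R)"
    and "R ** pinv X ** R ** (pinv R ** X ** pinv R) ** (R ** pinv X ** R) = R ** pinv X ** R"
    and "pinv R ** X ** pinv R ** (R ** pinv X ** R) ** (pinv R ** X ** pinv R) = pinv R ** X ** pinv R"
    and "B ** M = R ** pinv X ** R ** (pinv R ** X ** pinv R) ** B ** M"
  using psd_congruence_symmetric[OF psd_pinv[OF psd_X] R_sym]
    psd_congruence_symmetric[OF psd_X pinv_R_sym]
  by (simp_all add: absorb_simps)

lemma trace_Q_optimal: "trace (Q ** (R ** pinv X ** R)) = trace X"
proof -
  have "trace (Q ** (R ** pinv X ** R)) = trace (R ** (Q ** R ** pinv X))"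
    using trace_mul_sym[of "Q ** R ** pinv X" R] by (simp add: matrix_mul_assoc)
  also have "\<dots> = trace X" by (simp add: absorb_simps)
  finally show ?thesis .
qed

lemma optimal_pair_value:
  "trace (Q ** (R ** pinv X ** R)) + trace (M ** (B ** (pinv R ** X ** pinv R) ** B)) = 2 * trace X"
proof -
  have "trace (M ** (B ** (pinv R ** X ** pinv R) ** B)) = trace (pinv R ** B ** (M ** B ** pinv R ** X))"
    using trace_mul_sym[of "M ** B ** pinv R ** X" "pinv R ** B"] by (simp add: matrix_mul_assoc)
  also have "\<dots> = trace X" by (simp add: absorb_simps)
  finally show ?thesis using trace_Q_optimal by simp
qed

lemma optimal_dual_eq:
  "Q ** (R ** pinv X ** R) ** pinv (B ** M ** B) ** B ** M = Q ** R ** pinv X ** pinv R ** B ** M"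
  by (simp add: absorb_simps pinv_R_square)

lemma optimal_dual_feasible:
  defines "D \<equiv> Q ** R ** pinv X ** pinv R ** B ** M"
  shows "transpose D = M ** pinv M ** transpose D" and "psd (Q - D ** pinv M ** transpose D)"
proof -
  have syms: "transpose Q = Q" "transpose M = M"
    using psd_Q psd_M by (simp_all add: psd_transpose)
  have D_transpose: "transpose D = M ** B ** pinv R ** pinv X ** R ** Q"
    unfolding D_def by (simp add: matrix_transpose_mul syms B_sym R_sym pinv_R_sym pinv_X_sym matrix_mul_assoc)
  then show "transpose D = M ** pinv M ** transpose D" by (simp add: absorb_simps)
  define N where "N = R ** pinv X ** pinv X ** R ** Q"
  define G where "G = Q ** R ** pinv X ** pinv X ** R ** Q"
  have N_transpose: "transpose N = Q ** R ** pinv X ** pinv X ** R"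
    unfolding N_def by (simp add: matrix_transpose_mul syms R_sym pinv_X_sym matrix_mul_assoc)
  have G: "D ** pinv M ** transpose D = G" "transpose N ** Q = G" "transpose N ** Q ** N = G"
    unfolding D_transpose N_transpose unfolding D_def G_def N_def by (simp_all add: absorb_simps)
  have "x \<bullet> (G *v x) \<le> x \<bullet> (Q *v x)" for x
  proof (rule psd_inner_le_quadratic[OF psd_Q])
    show "(N *v x) \<bullet> (Q *v (N *v x)) = x \<bullet> (G *v x)"
      using quadratic_congruence[of x N Q] G(3) by simp
    show "(N *v x) \<bullet> (Q *v x) = x \<bullet> (G *v x)"
      using inner_matrix_transpose[of x "transpose N" "Q *v x"] G(2) by (simp add: matrix_vector_mul_assoc)
  qed
  moreover have "transpose (Q - G) = Q - G"
    using G(2) N_transpose syms unfolding G_def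
    by (simp add: transpose_diff matrix_transpose_mul R_sym pinv_X_sym matrix_mul_assoc)
  ultimately show "psd (Q - D ** pinv M ** transpose D)"
    unfolding G(1) psd_def by (simp add: matrix_vector_mult_diff_rdistrib inner_diff_right)
qed

lemma optimal_dual_value: "trace (2 *\<^sub>R (Q ** R ** pinv X ** pinv R ** B ** M ** B)) = 2 * trace X"
proof -
  have "Q ** R ** pinv X ** pinv R ** B ** M ** B = Q ** (R ** pinv X ** R)" by (simp add: absorb_simps)
  then show ?thesis using trace_Q_optimal by (simp add: trace_scaleR)
qed

end

theorem theorem6:
  fixes Q M B :: "real^'n^'n"
  assumes "psd Q" and "psd M" and "psd B"
    and "col_space (B ** M ** B) \<subseteq> col_space Q"
  defines "R \<equiv> psd_sqrt (B ** M ** B)"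
    and "\<Omega> \<equiv> {P :: real^'n^'n. psd (Q - P ** pinv M ** transpose P)
                 \<and> transpose P = M ** pinv M ** transpose P}"
    and "\<S> \<equiv> {(S :: real^'n^'n, S' :: real^'n^'n). psd S \<and> psd S'
                 \<and> S ** S' ** S = S \<and> S' ** S ** S' = S' \<and> B ** M = S ** S' ** B ** M}"
    and "J \<equiv> (\<lambda>(S :: real^'n^'n, S' :: real^'n^'n). trace (Q ** S) + trace (M ** (B ** S' ** B)))"
  shows "(2 * trace (psd_sqrt (R ** Q ** R)) \<in> J ` \<S> \<and> (\<forall>z\<in>J ` \<S>. 2 * trace (psd_sqrt (R ** Q ** R)) \<le> z))
    \<and> (2 * trace (psd_sqrt (R ** Q ** R)) \<in> (\<lambda>P. trace (2 *\<^sub>R (P ** B))) ` \<Omega>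
       \<and> (\<forall>z\<in>(\<lambda>P. trace (2 *\<^sub>R (P ** B))) ` \<Omega>. z \<le> 2 * trace (psd_sqrt (R ** Q ** R))))
    \<and> ((R ** pinv (psd_sqrt (R ** Q ** R)) ** R, pinv R ** psd_sqrt (R ** Q ** R) ** pinv R) \<in> \<S>)
    \<and> (J (R ** pinv (psd_sqrt (R ** Q ** R)) ** R, pinv R ** psd_sqrt (R ** Q ** R) ** pinv R)
           = 2 * trace (psd_sqrt (R ** Q ** R)))
    \<and> (Q ** (R ** pinv (psd_sqrt (R ** Q ** R)) ** R) ** pinv (B ** M ** B) ** B ** M
           = Q ** R ** pinv (psd_sqrt (R ** Q ** R)) ** pinv R ** B ** M)
    \<and> (Q ** (R ** pinv (psd_sqrt (R ** Q ** R)) ** R) ** pinv (B ** M ** B) ** B ** M \<in> \<Omega>)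
    \<and> (trace (2 *\<^sub>R (Q ** (R ** pinv (psd_sqrt (R ** Q ** R)) ** R) ** pinv (B ** M ** B) ** B ** M ** B))
           = 2 * trace (psd_sqrt (R ** Q ** R)))"
proof -
  interpret trace_duality Q M B R "psd_sqrt (R ** Q ** R)" "R ** pinv R"
    by unfold_locales (rule assms(1,2,4) psd_transpose[OF assms(3)] R_def reflexive)+
  let ?X = "psd_sqrt (R ** Q ** R)"
  let ?S = "R ** pinv ?X ** R" and ?S' = "pinv R ** ?X ** pinv R"
  let ?D = "Q ** R ** pinv ?X ** pinv R ** B ** M"
  have primal: "(?S, ?S') \<in> \<S>" "J (?S, ?S') = 2 * trace ?X"
    unfolding \<S>_def J_def using optimal_pair_feasible optimal_pair_value by auto
  have dual: "?D \<in> \<Omega>" "trace (2 *\<^sub>R (?D ** B)) = 2 * trace ?X"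
    unfolding \<Omega>_def using optimal_dual_feasible optimal_dual_value by auto
  have "2 * trace ?X \<le> J (S, S')" if "(S, S') \<in> \<S>" for S S'
    using weak_duality[OF psd_M B_sym, of S S' Q ?D] that dual unfolding \<S>_def \<Omega>_def J_def
    by (auto simp: psd_transpose)
  moreover have "trace (2 *\<^sub>R (P ** B)) \<le> 2 * trace ?X" if "P \<in> \<Omega>" for P
    using weak_duality[OF psd_M B_sym, of ?S ?S' Q P] that primal unfolding \<S>_def \<Omega>_def J_def
    by (auto simp: psd_transpose)
  moreover have "2 * trace ?X \<in> J ` \<S>" "2 * trace ?X \<in> (\<lambda>P. trace (2 *\<^sub>R (P ** B))) ` \<Omega>"
    using image_eqI[where f = J, OF primal(2)[symmetric] primal(1)]
      image_eqI[where f = "\<lambda>P. trace (2 *\<^sub>R (P ** B))", OF dual(2)[symmetric] dual(1)] .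
  ultimately show ?thesis
    using primal dual optimal_dual_eq by auto
qed

end
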